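(* Let $\ell,\ell'\ge1$ and let $A$ ($\ell\times\ell$) and $A'$ ($\ell'\times\ell'$) be symmetric matrices with zero diagonal and all off-diagonal entries in $\{\frac12,1\}$, both dense. Let $J$ be the $\ell'\times\ell$ all-ones matrix and let $$C=\begin{pmatrix}A & J^{T}\\ J & A'\end{pmatrix}.$$ Then $C$ is dense.
   Context: For a symmetric $s\times s$ matrix $M$, consider the quadratic form $\mathbf{u}M\mathbf{u}^T$ on the simplex $\{\mathbf{u}=(u_1,\dots,u_s): u_i\ge 0,\ \sum_i u_i=1\}$. $M$ is called dense if this form does not attain its maximum on the boundary of the simplex, i.e. every maximizer $\mathbf{u}$ has all coordinates $u_i>0$. *)

theory Defs
  imports "HOL-Analysis.Analysis"
begin

definition std_simplex :: "(real ^ 'n::finite) set" where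
  "std_simplex = {u. (\<forall>i. 0 \<le> u $ i) \<and> (\<Sum>i\<in>UNIV. u $ i) = 1}"

definition qform :: "real ^ 'n ^ 'n \<Rightarrow> real ^ 'n \<Rightarrow> real" where
  "qform M u = (\<Sum>i\<in>UNIV. \<Sum>j\<in>UNIV. u $ i * M $ i $ j * u $ j)"

definition is_maximizer :: "real ^ 'n ^ 'n \<Rightarrow> real ^ 'n::finite \<Rightarrow> bool" where
  "is_maximizer M u \<longleftrightarrow> u \<in> std_simplex \<and> (\<forall>v\<in>std_simplex. qform M v \<le> qform M u)"

definition dense_matrix :: "real ^ 'n ^ 'n::finite \<Rightarrow> bool" where
  "dense_matrix M \<longleftrightarrow> (\<forall>u. is_maximizer M u \<longrightarrow> (\<forall>i. u $ i > 0))"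

definition symmetric_matrix :: "real ^ 'n ^ 'n \<Rightarrow> bool" where
  "symmetric_matrix M \<longleftrightarrow> transpose M = M"

definition half_one_matrix :: "real ^ 'n ^ 'n \<Rightarrow> bool" where
  "half_one_matrix M \<longleftrightarrow> (\<forall>i. M $ i $ i = 0) \<and> (\<forall>i j. i \<noteq> j \<longrightarrow> M $ i $ j \<in> {1/2, 1})"

(* block matrix  [[A, J^T],[J, A']]  with J the all-ones matrix; indices Inl = first block *)
definition block_join :: "real ^ 'n ^ 'n \<Rightarrow> real ^ 'm ^ 'm \<Rightarrow> real ^ ('n + 'm) ^ ('n + 'm)" where
  "block_join A A' = (\<chi> i j. case (i, j) of
      (Inl a, Inl b) \<Rightarrow> A $ a $ b
    | (Inr a, Inr b) \<Rightarrow> A' $ a $ b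
    | _ \<Rightarrow> 1)"

end

theory Submission
  imports Defs
begin

text \<open>
  Write a point of the simplex of the joined matrix as \<open>mix s x y\<close>, with \<open>x\<close>, \<open>y\<close> in the
  two smaller simplices and \<open>s\<close> the mass on the first block. Since the off-diagonal block is
  all ones, its quadratic form is \<open>s\<^sup>2 f + (1 - s)\<^sup>2 g + 2 s (1 - s)\<close> with \<open>f\<close>, \<open>g\<close> the forms of
  \<open>A\<close>, \<open>A'\<close> at \<open>x\<close>, \<open>y\<close>. Zero diagonals and entries at most 1 give \<open>0 \<le> f, g < 1\<close>, and then
  moving mass \<open>(1 - g)/2\<close> onto the first block strictly beats \<open>s = 0\<close> (symmetrically for \<open>s = 1\<close>).
  So a maximizer has \<open>0 < s < 1\<close>, hence \<open>x\<close> and \<open>y\<close> maximize the forms of \<open>A\<close> and \<open>A'\<close>,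
  and density of \<open>A\<close> and \<open>A'\<close> makes all coordinates positive.
\<close>

lemma sum_UNIV_Plus:
  "(\<Sum>i\<in>(UNIV::('a::finite + 'b::finite) set). f i) = (\<Sum>a\<in>UNIV. f (Inl a)) + (\<Sum>b\<in>UNIV. f (Inr b))"
  using sum.Plus[of "UNIV::'a set" "UNIV::'b set" f] by (simp add: o_def)

lemma block_join_nth [simp]:
  "block_join A A' $ Inl a $ Inl b = A $ a $ b"
  "block_join A A' $ Inr c $ Inr d = A' $ c $ d"
  "block_join A A' $ Inl a $ Inr d = 1"
  "block_join A A' $ Inr c $ Inl b = 1"
  by (simp_all add: block_join_def)

lemma std_simplex_nonempty: "\<exists>x::real^'n::finite. x \<in> std_simplex"
  by (rule exI[of _ "\<chi> i. 1 / real CARD('n)"]) (simp add: std_simplex_def)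

lemma qform_scale: "qform M (c *s x) = c\<^sup>2 * qform M x"
  unfolding qform_def by (simp add: sum_distrib_left power2_eq_square algebra_simps)

lemma qform_block_join:
  fixes A :: "real ^ 'n::finite ^ 'n" and A' :: "real ^ 'm::finite ^ 'm"
  shows "qform (block_join A A') w =
    qform A (\<chi> a. w $ Inl a) + qform A' (\<chi> b. w $ Inr b)
    + 2 * (\<Sum>a\<in>UNIV. w $ Inl a) * (\<Sum>b\<in>UNIV. w $ Inr b)"
proof -
  have "(\<Sum>b\<in>UNIV. \<Sum>a\<in>UNIV. w $ Inl a * w $ Inr b) = (\<Sum>a\<in>UNIV. \<Sum>b\<in>UNIV. w $ Inl a * w $ Inr b)"
    by (rule sum.swap)
  then show ?thesis
    unfolding qform_def
    by (simp add: sum_UNIV_Plus sum.distrib sum_product sum_distrib_left sum_distrib_right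
        algebra_simps)
qed

lemma qform_nonneg:
  assumes "\<And>i j. 0 \<le> M $ i $ j" and "x \<in> std_simplex"
  shows "0 \<le> qform M x"
  using assms unfolding qform_def std_simplex_def by (auto intro!: sum_nonneg)

lemma qform_less_one:
  assumes diag: "\<And>i. M $ i $ i = 0" and le1: "\<And>i j. M $ i $ j \<le> 1"
    and x: "x \<in> std_simplex"
  shows "qform M x < 1"
proof -
  have xnn: "\<And>i. 0 \<le> x $ i" and xsum: "(\<Sum>i\<in>UNIV. x $ i) = 1"
    using x unfolding std_simplex_def by auto
  obtain k where "x $ k \<noteq> 0"
    using xsum by (metis (no_types, lifting) sum.neutral zero_neq_one)
  then have "0 < x $ k * x $ k" by (auto simp: zero_less_mult_iff linorder_neq_iff)
  also have "\<dots> \<le> (\<Sum>i\<in>UNIV. x $ i * x $ i)"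
    by (rule member_le_sum) auto
  finally have diag_pos: "0 < (\<Sum>i\<in>UNIV. x $ i * x $ i)" .
  have "qform M x \<le> (\<Sum>i\<in>UNIV. \<Sum>j\<in>UNIV. x $ i * (if i = j then 0 else 1) * x $ j)"
    unfolding qform_def using diag le1 xnn
    by (intro sum_mono mult_right_mono mult_left_mono) auto
  also have "\<dots> = (\<Sum>i\<in>UNIV. \<Sum>j\<in>UNIV. x $ i * x $ j) - (\<Sum>i\<in>UNIV. x $ i * x $ i)"
  proof -
    have "\<And>i j. x $ i * (if i = j then 0 else 1) * x $ j
        = x $ i * x $ j - (if i = j then x $ i * x $ i else 0)"
      by simp
    then show ?thesis by (simp add: sum_subtractf)
  qed
  also have "(\<Sum>i\<in>UNIV. \<Sum>j\<in>UNIV. x $ i * x $ j) = 1"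
    using xsum by (simp add: sum_product[symmetric])
  finally show ?thesis using diag_pos by linarith
qed

definition mix :: "real \<Rightarrow> real ^ 'n::finite \<Rightarrow> real ^ 'm::finite \<Rightarrow> real ^ ('n + 'm)" where
  "mix s x y = (\<chi> i. case i of Inl a \<Rightarrow> s * x $ a | Inr b \<Rightarrow> (1 - s) * y $ b)"

lemma mix_in_std_simplex:
  assumes "x \<in> std_simplex" "y \<in> std_simplex" "0 \<le> s" "s \<le> 1"
  shows "mix s x y \<in> std_simplex"
  using assms
  by (auto simp: std_simplex_def mix_def sum_UNIV_Plus sum_distrib_left[symmetric]
      split: sum.split)

lemma qform_block_join_mix:
  fixes A :: "real ^ 'n::finite ^ 'n" and A' :: "real ^ 'm::finite ^ 'm"
  assumes "x \<in> std_simplex" "y \<in> std_simplex"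
  shows "qform (block_join A A') (mix s x y) = s\<^sup>2 * qform A x + (1 - s)\<^sup>2 * qform A' y + 2 * s * (1 - s)"
proof -
  have blocks: "(\<chi> a. mix s x y $ Inl a) = s *s x" "(\<chi> b. mix s x y $ Inr b) = (1 - s) *s y"
    by (simp_all add: vec_eq_iff mix_def left_diff_distrib)
  have masses: "(\<Sum>a\<in>UNIV. mix s x y $ Inl a) = s" "(\<Sum>b\<in>UNIV. mix s x y $ Inr b) = 1 - s"
    using assms by (simp_all add: mix_def std_simplex_def sum_distrib_left[symmetric])
  show ?thesis
    unfolding qform_block_join blocks masses qform_scale by simp
qed

lemma std_simplex_Plus_eq_mix:
  assumes "w \<in> std_simplex"
  obtains s x y where "0 \<le> s" "s \<le> 1" "x \<in> std_simplex" "y \<in> std_simplex" "w = mix s x y"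
proof -
  define s where "s = (\<Sum>a\<in>UNIV. w $ Inl a)"
  have wnn: "\<And>i. 0 \<le> w $ i" and "(\<Sum>i\<in>UNIV. w $ i) = 1"
    using assms unfolding std_simplex_def by auto
  then have rest: "(\<Sum>b\<in>UNIV. w $ Inr b) = 1 - s"
    by (simp add: sum_UNIV_Plus s_def)
  have "0 \<le> s" "0 \<le> 1 - s"
    using wnn sum_nonneg[of UNIV "\<lambda>b. w $ Inr b"] unfolding s_def rest
    by (auto intro: sum_nonneg)
  \<comment> \<open>A block of mass 0 is \<open>0\<close> times any point of its simplex.\<close>
  have block:
    "\<exists>z\<in>std_simplex. \<forall>c. v c = t * z $ c"
    if "\<And>c. 0 \<le> v c" "(\<Sum>c\<in>UNIV. v c) = t" for v :: "'c::finite \<Rightarrow> real" and t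
  proof (cases "t = 0")
    case True
    then have "\<forall>c. v c = 0" using that sum_nonneg_eq_0_iff[of UNIV v] by auto
    with True std_simplex_nonempty show ?thesis by auto
  next
    case False
    then show ?thesis
      using that
      by (intro bexI[of _ "\<chi> c. v c / t"])
         (auto simp: std_simplex_def sum_divide_distrib[symmetric] intro: divide_nonneg_nonneg
               sum_nonneg)
  qed
  obtain x where "x \<in> std_simplex" "\<And>a. w $ Inl a = s * x $ a"
    using block[of "\<lambda>a. w $ Inl a" s] wnn s_def by blast
  moreover obtain y where "y \<in> std_simplex" "\<And>b. w $ Inr b = (1 - s) * y $ b"
    using block[of "\<lambda>b. w $ Inr b" "1 - s"] wnn rest by blast
  ultimately have "w = mix s x y"
    by (simp add: vec_eq_iff mix_def split: sum.split)
  with \<open>0 \<le> s\<close> \<open>0 \<le> 1 - s\<close> \<open>x \<in> std_simplex\<close> \<open>y \<in> std_simplex\<close> show thesis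
    using that by simp
qed

lemma mixing_beats_pure_block:
  fixes f g :: real
  assumes "0 \<le> f" "0 \<le> g" "g < 1"
  defines "s \<equiv> (1 - g) / 2"
  shows "g < s\<^sup>2 * f + (1 - s)\<^sup>2 * g + 2 * s * (1 - s)"
proof -
  have "s\<^sup>2 * f + (1 - s)\<^sup>2 * g + 2 * s * (1 - s) - g = s * (1 - g) * (1 + (f + g) / 2)"
    unfolding s_def by (simp add: power2_eq_square field_simps)
  also have "\<dots> > 0"
    using assms unfolding s_def by (intro mult_pos_pos) (auto simp: add_pos_nonneg)
  finally show ?thesis by simp
qed

lemma block_join_maximizer_mass_strict:
  fixes A :: "real ^ 'n::finite ^ 'n" and A' :: "real ^ 'm::finite ^ 'm"
  assumes max: "is_maximizer (block_join A A') (mix s x y)"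
    and x: "x \<in> std_simplex" and y: "y \<in> std_simplex"
    and A: "\<And>v. v \<in> std_simplex \<Longrightarrow> 0 \<le> qform A v \<and> qform A v < 1"
    and A': "\<And>v. v \<in> std_simplex \<Longrightarrow> 0 \<le> qform A' v \<and> qform A' v < 1"
  shows "s \<noteq> 0" and "s \<noteq> 1"
proof -
  define f where "f = qform A x"
  define g where "g = qform A' y"
  have fg: "0 \<le> f" "f < 1" "0 \<le> g" "g < 1"
    using A[OF x] A'[OF y] unfolding f_def g_def by auto
  have form_mix: "qform (block_join A A') (mix t x y) = t\<^sup>2 * f + (1 - t)\<^sup>2 * g + 2 * t * (1 - t)" for t
    unfolding f_def g_def by (rule qform_block_join_mix[OF x y])
  have improve: "qform (block_join A A') (mix t x y) \<le> qform (block_join A A') (mix s x y)"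
    if "0 \<le> t" "t \<le> 1" for t
    using max mix_in_std_simplex[OF x y that] unfolding is_maximizer_def by blast
  show "s \<noteq> 0"
  proof
    assume "s = 0"
    then have "qform (block_join A A') (mix ((1 - g) / 2) x y) \<le> g"
      using improve[of "(1 - g) / 2"] fg by (simp add: form_mix)
    then show False
      using mixing_beats_pure_block[of f g] fg by (simp add: form_mix)
  qed
  show "s \<noteq> 1"
  proof
    assume "s = 1"
    define b where "b = (1 - f) / 2"
    then have "qform (block_join A A') (mix (1 - b) x y) \<le> f"
      using improve[of "1 - b"] fg \<open>s = 1\<close> by (simp add: form_mix)
    also have "f < b\<^sup>2 * g + (1 - b)\<^sup>2 * f + 2 * b * (1 - b)"
      using mixing_beats_pure_block[of g f] fg unfolding b_def by simp
    also have "\<dots> = qform (block_join A A') (mix (1 - b) x y)"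
      by (simp add: form_mix algebra_simps)
    finally show False by simp
  qed
qed

lemma block_join_maximizer_left:
  fixes A :: "real ^ 'n::finite ^ 'n" and A' :: "real ^ 'm::finite ^ 'm"
  assumes max: "is_maximizer (block_join A A') (mix s x y)"
    and x: "x \<in> std_simplex" and y: "y \<in> std_simplex" and s: "0 < s" "s \<le> 1"
  shows "is_maximizer A x"
  unfolding is_maximizer_def
proof (intro conjI ballI x)
  fix v :: "real ^ 'n" assume v: "v \<in> std_simplex"
  have "qform (block_join A A') (mix s v y) \<le> qform (block_join A A') (mix s x y)"
    using max mix_in_std_simplex[OF v y] s unfolding is_maximizer_def by auto
  then have "s\<^sup>2 * qform A v \<le> s\<^sup>2 * qform A x"
    by (simp add: qform_block_join_mix[OF v y] qform_block_join_mix[OF x y])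
  then show "qform A v \<le> qform A x"
    using s by simp
qed

lemma block_join_maximizer_right:
  fixes A :: "real ^ 'n::finite ^ 'n" and A' :: "real ^ 'm::finite ^ 'm"
  assumes max: "is_maximizer (block_join A A') (mix s x y)"
    and x: "x \<in> std_simplex" and y: "y \<in> std_simplex" and s: "0 \<le> s" "s < 1"
  shows "is_maximizer A' y"
  unfolding is_maximizer_def
proof (intro conjI ballI y)
  fix v :: "real ^ 'm" assume v: "v \<in> std_simplex"
  have "qform (block_join A A') (mix s x v) \<le> qform (block_join A A') (mix s x y)"
    using max mix_in_std_simplex[OF x v] s unfolding is_maximizer_def by auto
  then have "(1 - s)\<^sup>2 * qform A' v \<le> (1 - s)\<^sup>2 * qform A' y"
    by (simp add: qform_block_join_mix[OF x v] qform_block_join_mix[OF x y])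
  then show "qform A' v \<le> qform A' y"
    using s by simp
qed

lemma half_one_matrix_qform_bounds:
  assumes "half_one_matrix M" "x \<in> std_simplex"
  shows "0 \<le> qform M x \<and> qform M x < 1"
proof -
  have diag: "\<And>i. M $ i $ i = 0" and off: "\<And>i j. i \<noteq> j \<Longrightarrow> M $ i $ j \<in> {1/2, 1}"
    using assms(1) unfolding half_one_matrix_def by auto
  have "0 \<le> M $ i $ j" "M $ i $ j \<le> 1" for i j
    using diag[of i] off[of i j] by (cases "i = j"; auto)+
  then show ?thesis
    using qform_nonneg qform_less_one diag assms(2) by blast
qed

theorem mainTheorem5:
  fixes A :: "real ^ 'n::finite ^ 'n" and A' :: "real ^ 'm::finite ^ 'm"
  assumes "symmetric_matrix A" and "half_one_matrix A" and "dense_matrix A"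
    and "symmetric_matrix A'" and "half_one_matrix A'" and "dense_matrix A'"
  shows "dense_matrix (block_join A A')"
  unfolding dense_matrix_def
proof (intro allI impI)
  fix w :: "real ^ ('n + 'm)" and k
  assume max: "is_maximizer (block_join A A') w"
  then obtain s x y where s: "0 \<le> s" "s \<le> 1" and x: "x \<in> std_simplex" and y: "y \<in> std_simplex"
    and w: "w = mix s x y"
    unfolding is_maximizer_def by (auto elim: std_simplex_Plus_eq_mix)
  have "s \<noteq> 0" "s \<noteq> 1"
    using block_join_maximizer_mass_strict[OF max[unfolded w] x y
        half_one_matrix_qform_bounds[OF assms(2)] half_one_matrix_qform_bounds[OF assms(5)]]
    by blast+
  with s have s': "0 < s" "s < 1" by auto
  have "is_maximizer A x" "is_maximizer A' y"
    using block_join_maximizer_left[OF max[unfolded w] x y]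
      block_join_maximizer_right[OF max[unfolded w] x y] s s' by auto
  with assms(3,6) have "\<forall>a. 0 < x $ a" "\<forall>b. 0 < y $ b"
    unfolding dense_matrix_def by blast+
  with s' show "0 < w $ k"
    by (simp add: w mix_def split: sum.split)
qed

end
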